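(* In the two-period setting of the context, assume $\frac{\hat\ell_n^P}{E_n}+\frac12\ge\frac{\hat\ell^P}{E}$ for all $n$. For $\alpha\in[0,1]$ let $\mathrm{SC}^{\mathrm{DP}}_\alpha$ denote the social cost $\sum_{n}f_n^\alpha(\boldsymbol\ell)$ evaluated at a Nash equilibrium $\boldsymbol\ell$ of $\mathcal G^{\mathrm{DP}}_\alpha$. Then $\mathrm{SC}^{\mathrm{DP}}_\alpha=(1-\alpha)\big[\frac{E^2}{2}+\frac{D^2}{2}(\alpha^2+V_E(1-\alpha)\alpha)\big]$ with $D=\hat\ell^P-\hat\ell^O$ and $V_E=\sum_n E_n^2/E^2$, and $\alpha\mapsto\mathrm{SC}^{\mathrm{DP}}_\alpha$ is a decreasing function of $\alpha$ on $[0,1]$.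
   Context: Two-period setting: users $\mathcal N=\{1,\dots,N\}$, periods $\mathcal H=\{P,O\}$. Each user $n$ has energy demand $E_n>0$ and preferred profile $(\hat\ell_n^P,\hat\ell_n^O)$ with $\hat\ell_n^h\ge0$, $\hat\ell_n^P+\hat\ell_n^O=E_n$; $E=\sum_nE_n$, $\hat\ell^h=\sum_n\hat\ell_n^h$, and $\hat\ell^P\ge\frac E2\ge\hat\ell^O$. Feasible set $\mathcal L_n=\{(\ell_n^P,\ell_n^O):\ell_n^P+\ell_n^O=E_n,\ \ell_n^P,\ell_n^O\ge0\}$, $\ell^h=\sum_n\ell_n^h$. Costs $C_h(x)=x^2$, utilities $u_n(\boldsymbol\ell_n)=-\sum_h(\ell_n^h-\hat\ell_n^h)^2$. DP bill $b_n^{\mathrm{DP}}=\frac{E_n}{E}((\ell^P)^2+(\ell^O)^2)$. In $\mathcal G^{\mathrm{DP}}_\alpha$ user $n$ minimizes $f_n^\alpha=(1-\alpha)b_n^{\mathrm{DP}}-\alpha u_n(\boldsymbol\ell_n)$ over $\mathcal L_n$. (For $\alpha\in(0,1]$ the equilibrium is unique; for $\alpha=0$ all equilibria have the same social cost $E^2/2$.) *)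

theory Defs
  imports Complex_Main
begin

text \<open>Users are indexed by {1..N}. A load profile assigns to each user n a pair
  (l_n^P, l_n^O) (peak, off-peak). Values outside {1..N} are irrelevant.\<close>

definition totE :: "nat \<Rightarrow> (nat \<Rightarrow> real) \<Rightarrow> real" where
  "totE N E = (\<Sum>n\<in>{1..N}. E n)"

definition totP :: "nat \<Rightarrow> (nat \<Rightarrow> real \<times> real) \<Rightarrow> real" where
  "totP N l = (\<Sum>n\<in>{1..N}. fst (l n))"

definition totO :: "nat \<Rightarrow> (nat \<Rightarrow> real \<times> real) \<Rightarrow> real" where
  "totO N l = (\<Sum>n\<in>{1..N}. snd (l n))"

definition feasible :: "(nat \<Rightarrow> real) \<Rightarrow> nat \<Rightarrow> (real \<times> real) set" where
  "feasible E n = {(p, q). p + q = E n \<and> p \<ge> 0 \<and> q \<ge> 0}"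

text \<open>DP bill with costs C_h(x) = x^2.\<close>
definition bill_DP :: "nat \<Rightarrow> (nat \<Rightarrow> real) \<Rightarrow> (nat \<Rightarrow> real \<times> real) \<Rightarrow> nat \<Rightarrow> real" where
  "bill_DP N E l n = E n / totE N E * ((totP N l)^2 + (totO N l)^2)"

definition util :: "(nat \<Rightarrow> real \<times> real) \<Rightarrow> (nat \<Rightarrow> real \<times> real) \<Rightarrow> nat \<Rightarrow> real" where
  "util lhat l n = - ((fst (l n) - fst (lhat n))^2 + (snd (l n) - snd (lhat n))^2)"

definition f_alpha :: "real \<Rightarrow> nat \<Rightarrow> (nat \<Rightarrow> real) \<Rightarrow> (nat \<Rightarrow> real \<times> real)
    \<Rightarrow> (nat \<Rightarrow> real \<times> real) \<Rightarrow> nat \<Rightarrow> real" where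
  "f_alpha \<alpha> N E lhat l n = (1 - \<alpha>) * bill_DP N E l n - \<alpha> * util lhat l n"

definition nash_DP :: "real \<Rightarrow> nat \<Rightarrow> (nat \<Rightarrow> real) \<Rightarrow> (nat \<Rightarrow> real \<times> real)
    \<Rightarrow> (nat \<Rightarrow> real \<times> real) \<Rightarrow> bool" where
  "nash_DP \<alpha> N E lhat l \<longleftrightarrow>
     (\<forall>n\<in>{1..N}. l n \<in> feasible E n) \<and>
     (\<forall>n\<in>{1..N}. \<forall>x\<in>feasible E n. f_alpha \<alpha> N E lhat l n \<le> f_alpha \<alpha> N E lhat (l(n := x)) n)"

definition SC_DP :: "real \<Rightarrow> nat \<Rightarrow> (nat \<Rightarrow> real) \<Rightarrow> (nat \<Rightarrow> real \<times> real)
    \<Rightarrow> (nat \<Rightarrow> real \<times> real) \<Rightarrow> real" where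
  "SC_DP \<alpha> N E lhat l = (\<Sum>n\<in>{1..N}. f_alpha \<alpha> N E lhat l n)"

end

theory Submission
  imports Defs
begin

text \<open>
  User n's objective is a convex quadratic in its own peak load, with derivative
  2(1-\<alpha>)(E_n/E)(l^P - l^O) + 4\<alpha>(l_n^P - lhat_n^P). The profile
  y_n = lhat_n^P - (1-\<alpha>) D E_n / (2E) makes all these derivatives vanish, and the share
  condition makes it feasible, so it is an equilibrium. Testing the first-order condition of an
  arbitrary equilibrium l against y and weighting user n by E/E_n, the aggregate terms collapse to
  -(1-\<alpha>)(l^P - y^P)^2, so that
  \<Sum>_n \<alpha>(l_n^P - y_n)^2 E/E_n + (1-\<alpha>)(l^P - y^P)^2 \<le> 0. Hence every equilibrium has
  the aggregate peak load of y and, for \<alpha> > 0, coincides with y; in either case its social cost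
  is that of y, which is the closed form. Between \<alpha> < \<beta> the closed form drops by
  (\<beta> - \<alpha>)(E^2 - D^2 Q)/2 with Q < 1.
\<close>

lemma sum_fun_upd_remove:
  fixes g :: "'b \<Rightarrow> 'c::ab_group_add"
  assumes "finite A" "n \<in> A"
  shows "(\<Sum>m\<in>A. g ((f(n := x)) m)) = (\<Sum>m\<in>A. g (f m)) - g (f n) + g x"
proof -
  have "(\<Sum>m\<in>A - {n}. g ((f(n := x)) m)) = (\<Sum>m\<in>A - {n}. g (f m))"
    by (rule sum.cong) auto
  then show ?thesis
    using assms by (simp add: sum.remove algebra_simps)
qed

lemma nonneg_if_quadratic_nonneg_near_zero:
  fixes a b :: real
  assumes "\<And>s. 0 < s \<Longrightarrow> s \<le> 1 \<Longrightarrow> 0 \<le> s * a + s\<^sup>2 * b"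
  shows "0 \<le> a"
proof (rule ccontr)
  assume "\<not> 0 \<le> a"
  define s where "s = min 1 (- a / (2 * (\<bar>b\<bar> + 1)))"
  have "0 < - a / (2 * (\<bar>b\<bar> + 1))"
    using \<open>\<not> 0 \<le> a\<close> by (intro divide_pos_pos) auto
  then have s_pos: "0 < s" and "s \<le> 1"
    by (auto simp: s_def)
  have "s \<le> - a / (2 * (\<bar>b\<bar> + 1))"
    by (simp add: s_def)
  then have "s * (2 * (\<bar>b\<bar> + 1)) \<le> - a"
    by (subst (asm) pos_le_divide_eq) auto
  moreover have "s * b \<le> s * (\<bar>b\<bar> + 1)"
    using s_pos by (intro mult_left_mono) auto
  ultimately have "s * b \<le> - a / 2"
    by linarith
  then have "s * (a + s * b) < 0"
    using s_pos \<open>\<not> 0 \<le> a\<close> by (intro mult_pos_neg) auto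
  with assms[OF s_pos \<open>s \<le> 1\<close>] show False
    by (simp add: power2_eq_square algebra_simps)
qed

lemma sum_power2_le_power2_sum:
  fixes f :: "'a \<Rightarrow> real"
  assumes "finite A" "\<And>x. x \<in> A \<Longrightarrow> 0 \<le> f x"
  shows "(\<Sum>x\<in>A. (f x)\<^sup>2) \<le> (\<Sum>x\<in>A. f x)\<^sup>2"
proof -
  have "(\<Sum>x\<in>A. (f x)\<^sup>2) \<le> (\<Sum>x\<in>A. f x * (\<Sum>y\<in>A. f y))"
    using assms by (intro sum_mono) (auto simp: power2_eq_square intro: mult_left_mono member_le_sum)
  also have "\<dots> = (\<Sum>x\<in>A. f x)\<^sup>2"
    by (simp add: sum_distrib_right power2_eq_square)
  finally show ?thesis .
qed

definition SC_closed_form :: "real \<Rightarrow> real \<Rightarrow> real \<Rightarrow> real \<Rightarrow> real" where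
  "SC_closed_form Et D V \<alpha> = (1 - \<alpha>) * (Et\<^sup>2 / 2 + D\<^sup>2 / 2 * (\<alpha>\<^sup>2 + V * (1 - \<alpha>) * \<alpha>))"

lemma SC_closed_form_strict_decreasing:
  fixes a b Et D V :: real
  assumes ab: "0 \<le> a" "a < b" "b \<le> 1" and D: "D\<^sup>2 \<le> Et\<^sup>2" "Et \<noteq> 0" and V: "0 < V" "V \<le> 1"
  shows "SC_closed_form Et D V b < SC_closed_form Et D V a"
proof -
  define Q where "Q = V + (1 - 2 * V) * (a + b) + (V - 1) * (a\<^sup>2 + a * b + b\<^sup>2)"
  have diff: "SC_closed_form Et D V a - SC_closed_form Et D V b = (b - a) * (Et\<^sup>2 - D\<^sup>2 * Q) / 2"
    unfolding SC_closed_form_def Q_def by (simp add: power2_eq_square field_simps)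
  have "0 \<le> (1 - a) * (1 - b) + a\<^sup>2 + b\<^sup>2"
    using ab by simp
  then have "(V - 1) * ((1 - a) * (1 - b) + a\<^sup>2 + b\<^sup>2) \<le> 0"
    using V by (simp add: mult_nonpos_nonneg)
  moreover have "Q - 1 = (V - 1) * ((1 - a) * (1 - b) + a\<^sup>2 + b\<^sup>2) - V * (a + b)"
    unfolding Q_def by (simp add: power2_eq_square algebra_simps)
  moreover have "0 < V * (a + b)"
    using ab V by simp
  ultimately have "Q < 1"
    by linarith
  then have "D\<^sup>2 * Q < Et\<^sup>2"
    using D by (cases "D = 0") (auto intro: order.strict_trans2[of _ "D\<^sup>2"])
  then have "0 < (b - a) * (Et\<^sup>2 - D\<^sup>2 * Q)"
    using ab by (intro mult_pos_pos) auto
  then show ?thesis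
    using diff by linarith
qed

lemma mem_feasible_iff: "x \<in> feasible E n \<longleftrightarrow> snd x = E n - fst x \<and> 0 \<le> fst x \<and> 0 \<le> snd x"
  by (cases x) (auto simp: feasible_def)

lemma snd_eq_if_feasible: "x \<in> feasible E n \<Longrightarrow> snd x = E n - fst x"
  by (simp add: mem_feasible_iff)

locale two_period =
  fixes N :: nat and E :: "nat \<Rightarrow> real" and lhat :: "nat \<Rightarrow> real \<times> real"
  assumes N_pos: "N \<ge> 1"
    and E_pos: "\<And>n. n \<in> {1..N} \<Longrightarrow> E n > 0"
    and lhat_feasible: "\<And>n. n \<in> {1..N} \<Longrightarrow> lhat n \<in> feasible E n"
begin

abbreviation Etot :: real where "Etot \<equiv> totE N E"

abbreviation D :: real where "D \<equiv> totP N lhat - totO N lhat"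

definition gradient :: "real \<Rightarrow> (nat \<Rightarrow> real \<times> real) \<Rightarrow> nat \<Rightarrow> real" where
  "gradient \<alpha> l n =
     2 * (1 - \<alpha>) * (E n / Etot) * (totP N l - totO N l) + 4 * \<alpha> * (fst (l n) - fst (lhat n))"

definition curvature :: "real \<Rightarrow> nat \<Rightarrow> real" where
  "curvature \<alpha> n = 2 * (1 - \<alpha>) * (E n / Etot) + 2 * \<alpha>"

definition eq_load :: "real \<Rightarrow> nat \<Rightarrow> real" where
  "eq_load \<alpha> n = fst (lhat n) - (1 - \<alpha>) * D / (2 * Etot) * E n"

definition eq_profile :: "real \<Rightarrow> nat \<Rightarrow> real \<times> real" where
  "eq_profile \<alpha> n = (eq_load \<alpha> n, E n - eq_load \<alpha> n)"

lemma Etot_pos: "Etot > 0"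
  unfolding totE_def using N_pos E_pos by (intro sum_pos) auto

lemma totO_eq_if_feasible:
  assumes "\<forall>n\<in>{1..N}. l n \<in> feasible E n"
  shows "totO N l = Etot - totP N l"
proof -
  have "totO N l = (\<Sum>n\<in>{1..N}. E n - fst (l n))"
    unfolding totO_def using assms snd_eq_if_feasible by (intro sum.cong) auto
  then show ?thesis
    by (simp add: totP_def totE_def sum_subtractf)
qed

lemma totP_fun_upd: "n \<in> {1..N} \<Longrightarrow> totP N (l(n := x)) = totP N l - fst (l n) + fst x"
  unfolding totP_def by (rule sum_fun_upd_remove) auto

lemma totO_fun_upd: "n \<in> {1..N} \<Longrightarrow> totO N (l(n := x)) = totO N l - snd (l n) + snd x"
  unfolding totO_def by (rule sum_fun_upd_remove) auto

lemma f_alpha_fun_upd: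
  assumes n: "n \<in> {1..N}" and "l n \<in> feasible E n"
  shows "f_alpha \<alpha> N E lhat (l(n := (fst (l n) + h, E n - (fst (l n) + h)))) n - f_alpha \<alpha> N E lhat l n
       = h * gradient \<alpha> l n + h\<^sup>2 * curvature \<alpha> n"
proof -
  have "snd (l n) = E n - fst (l n)" "snd (lhat n) = E n - fst (lhat n)"
    using assms lhat_feasible snd_eq_if_feasible by auto
  then show ?thesis
    unfolding f_alpha_def bill_DP_def util_def gradient_def curvature_def
      totP_fun_upd[OF n] totO_fun_upd[OF n] fun_upd_same fst_conv snd_conv
    by algebra
qed

lemma nash_DP_first_order:
  assumes nash: "nash_DP \<alpha> N E lhat l" and n: "n \<in> {1..N}" and t: "0 \<le> t" "t \<le> E n"
  shows "0 \<le> (t - fst (l n)) * gradient \<alpha> l n"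
proof (rule nonneg_if_quadratic_nonneg_near_zero)
  fix s :: real
  assume s: "0 < s" "s \<le> 1"
  have feas: "l n \<in> feasible E n"
    using nash n by (simp add: nash_DP_def)
  define h where "h = s * (t - fst (l n))"
  have convex: "fst (l n) + h = (1 - s) * fst (l n) + s * t"
    by (simp add: h_def algebra_simps)
  have "0 \<le> fst (l n)" "fst (l n) \<le> E n"
    using feas by (auto simp: feasible_def)
  then have "0 \<le> fst (l n) + h" "fst (l n) + h \<le> E n"
    unfolding convex using s t by (auto intro: convex_bound_le)
  then have "(fst (l n) + h, E n - (fst (l n) + h)) \<in> feasible E n"
    by (simp add: feasible_def)
  then have "0 \<le> f_alpha \<alpha> N E lhat (l(n := (fst (l n) + h, E n - (fst (l n) + h)))) n
                  - f_alpha \<alpha> N E lhat l n"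
    using nash n unfolding nash_DP_def by fastforce
  also have "\<dots> = h * gradient \<alpha> l n + h\<^sup>2 * curvature \<alpha> n"
    by (rule f_alpha_fun_upd[where l = l, OF n feas])
  also have "\<dots> = s * ((t - fst (l n)) * gradient \<alpha> l n) + s\<^sup>2 * ((t - fst (l n))\<^sup>2 * curvature \<alpha> n)"
    by (simp add: h_def power2_eq_square algebra_simps)
  finally show "0 \<le> s * ((t - fst (l n)) * gradient \<alpha> l n)
                  + s\<^sup>2 * ((t - fst (l n))\<^sup>2 * curvature \<alpha> n)" .
qed

lemma curvature_nonneg: "0 \<le> \<alpha> \<Longrightarrow> \<alpha> \<le> 1 \<Longrightarrow> n \<in> {1..N} \<Longrightarrow> 0 \<le> curvature \<alpha> n"
  using E_pos[of n] Etot_pos by (simp add: curvature_def)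

lemma nash_DP_if_stationary:
  assumes "0 \<le> \<alpha>" "\<alpha> \<le> 1"
    and feas: "\<forall>n\<in>{1..N}. l n \<in> feasible E n"
    and stationary: "\<And>n. n \<in> {1..N} \<Longrightarrow> gradient \<alpha> l n = 0"
  shows "nash_DP \<alpha> N E lhat l"
  unfolding nash_DP_def
proof (intro conjI feas ballI)
  fix n x
  assume n: "n \<in> {1..N}" and x: "x \<in> feasible E n"
  have ln: "l n \<in> feasible E n"
    using feas n by blast
  define h where "h = fst x - fst (l n)"
  have "x = (fst (l n) + h, E n - (fst (l n) + h))"
    using x by (auto simp: h_def feasible_def)
  then have "f_alpha \<alpha> N E lhat (l(n := x)) n - f_alpha \<alpha> N E lhat l n = h\<^sup>2 * curvature \<alpha> n"
    using f_alpha_fun_upd[where l = l, OF n ln, of \<alpha> h] stationary[OF n] by simp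
  also have "\<dots> \<ge> 0"
    using curvature_nonneg[OF assms(1,2) n] by simp
  finally show "f_alpha \<alpha> N E lhat l n \<le> f_alpha \<alpha> N E lhat (l(n := x)) n"
    by simp
qed

lemma lhat_totals: "totP N lhat + totO N lhat = Etot"
  using totO_eq_if_feasible[of lhat] lhat_feasible by simp

lemma totP_eq_profile: "totP N (eq_profile \<alpha>) = (Etot + \<alpha> * D) / 2"
proof -
  have "totP N (eq_profile \<alpha>) = totP N lhat - (1 - \<alpha>) * D / (2 * Etot) * Etot"
    by (simp add: totP_def totE_def eq_profile_def eq_load_def sum_subtractf sum_distrib_left)
  also have "\<dots> = totP N lhat - (1 - \<alpha>) * D / 2"
    using Etot_pos by simp
  also have "\<dots> = (Etot + \<alpha> * D) / 2"
    by (simp add: lhat_totals[symmetric] field_simps)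
  finally show ?thesis .
qed

lemma gradient_eq:
  assumes "\<forall>n\<in>{1..N}. l n \<in> feasible E n"
  shows "gradient \<alpha> l n = 4 * \<alpha> * (fst (l n) - eq_load \<alpha> n)
           + 4 * (1 - \<alpha>) * (E n / Etot) * (totP N l - totP N (eq_profile \<alpha>))"
proof -
  define w where "w = E n / Etot"
  have y: "eq_load \<alpha> n = fst (lhat n) - (1 - \<alpha>) * D * w / 2"
    by (simp add: eq_load_def w_def)
  have O: "totO N l = Etot - totP N l"
    by (rule totO_eq_if_feasible[OF assms])
  show ?thesis
    unfolding gradient_def totP_eq_profile w_def[symmetric] y
    by (simp add: O field_simps)
qed

lemma D_sq_le_Etot_sq: "D\<^sup>2 \<le> Etot\<^sup>2"
proof -
  have "0 \<le> fst (lhat n) \<and> 0 \<le> snd (lhat n)" if "n \<in> {1..N}" for n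
    using lhat_feasible[OF that] mem_feasible_iff by blast
  then have "0 \<le> totP N lhat" "0 \<le> totO N lhat"
    unfolding totP_def totO_def by (auto intro: sum_nonneg)
  then have "\<bar>D\<bar> \<le> \<bar>Etot\<bar>"
    using lhat_totals by linarith
  then show ?thesis
    by (simp add: abs_le_square_iff)
qed

lemma energy_square_share_pos: "0 < (\<Sum>n\<in>{1..N}. (E n)\<^sup>2) / Etot\<^sup>2"
  using N_pos E_pos Etot_pos by (intro divide_pos_pos sum_pos) force+

lemma energy_square_share_le_1: "(\<Sum>n\<in>{1..N}. (E n)\<^sup>2) / Etot\<^sup>2 \<le> 1"
proof -
  have "(\<Sum>n\<in>{1..N}. (E n)\<^sup>2) \<le> Etot\<^sup>2"
    unfolding totE_def using E_pos by (intro sum_power2_le_power2_sum) (auto intro: less_imp_le)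
  then show ?thesis
    using Etot_pos by simp
qed

lemma SC_DP_if_feasible:
  assumes feas: "\<forall>n\<in>{1..N}. l n \<in> feasible E n"
  shows "SC_DP \<alpha> N E lhat l = (1 - \<alpha>) * ((totP N l)\<^sup>2 + (Etot - totP N l)\<^sup>2)
           + 2 * (\<Sum>n\<in>{1..N}. \<alpha> * (fst (l n) - fst (lhat n))\<^sup>2)"
proof -
  define C where "C = (1 - \<alpha>) * ((totP N l)\<^sup>2 + (Etot - totP N l)\<^sup>2)"
  have "f_alpha \<alpha> N E lhat l n = C * (E n / Etot) + 2 * (\<alpha> * (fst (l n) - fst (lhat n))\<^sup>2)"
    if n: "n \<in> {1..N}" for n
  proof -
    have "snd (l n) = E n - fst (l n)" "snd (lhat n) = E n - fst (lhat n)"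
      using snd_eq_if_feasible feas n lhat_feasible[OF n] by auto
    moreover have "totO N l = Etot - totP N l"
      by (rule totO_eq_if_feasible[OF feas])
    ultimately show ?thesis
      unfolding f_alpha_def bill_DP_def util_def C_def by algebra
  qed
  then have "SC_DP \<alpha> N E lhat l
      = (\<Sum>n\<in>{1..N}. C * (E n / Etot) + 2 * (\<alpha> * (fst (l n) - fst (lhat n))\<^sup>2))"
    unfolding SC_DP_def by (rule sum.cong[OF refl])
  also have "\<dots> = C * (Etot / Etot) + 2 * (\<Sum>n\<in>{1..N}. \<alpha> * (fst (l n) - fst (lhat n))\<^sup>2)"
    by (simp add: sum.distrib sum_distrib_left[symmetric] sum_divide_distrib[symmetric] totE_def)
  finally show ?thesis
    using Etot_pos by (simp add: C_def)
qed

end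

locale two_period_peak = two_period +
  assumes peak_heavy: "totO N lhat \<le> totP N lhat"
    and share_cond: "\<And>n. n \<in> {1..N} \<Longrightarrow> totP N lhat / Etot \<le> fst (lhat n) / E n + 1 / 2"
begin

lemma eq_profile_feasible:
  assumes "0 \<le> \<alpha>" "\<alpha> \<le> 1" and n: "n \<in> {1..N}"
  shows "eq_profile \<alpha> n \<in> feasible E n"
proof -
  have En: "E n > 0"
    using E_pos[OF n] .
  have "D / (2 * Etot) = totP N lhat / Etot - 1 / 2"
    using lhat_totals Etot_pos by (simp add: field_simps)
  also have "\<dots> \<le> fst (lhat n) / E n"
    using share_cond[OF n] by simp
  finally have "D / (2 * Etot) * E n \<le> fst (lhat n)"
    using En by (simp add: pos_le_divide_eq)
  moreover have "0 \<le> D / (2 * Etot) * E n"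
    using peak_heavy Etot_pos En by simp
  moreover have "eq_load \<alpha> n = fst (lhat n) - (1 - \<alpha>) * (D / (2 * Etot) * E n)"
    by (simp add: eq_load_def)
  ultimately have "0 \<le> eq_load \<alpha> n" "eq_load \<alpha> n \<le> fst (lhat n)"
    using assms(1,2) mult_left_le_one_le[of "D / (2 * Etot) * E n" "1 - \<alpha>"]
      mult_nonneg_nonneg[of "1 - \<alpha>" "D / (2 * Etot) * E n"]
    by linarith+
  moreover have "fst (lhat n) \<le> E n"
    using lhat_feasible[OF n] by (auto simp: mem_feasible_iff)
  ultimately show ?thesis
    by (simp add: eq_profile_def feasible_def)
qed

lemma nash_DP_eq_profile: "0 \<le> \<alpha> \<Longrightarrow> \<alpha> \<le> 1 \<Longrightarrow> nash_DP \<alpha> N E lhat (eq_profile \<alpha>)"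
  using eq_profile_feasible gradient_eq[of "eq_profile \<alpha>" \<alpha>]
  by (intro nash_DP_if_stationary ballI) (auto simp: eq_profile_def)

lemma nash_DP_distance_bound:
  assumes "0 \<le> \<alpha>" "\<alpha> \<le> 1" and nash: "nash_DP \<alpha> N E lhat l"
  shows "(\<Sum>n\<in>{1..N}. \<alpha> * (fst (l n) - eq_load \<alpha> n)\<^sup>2 / (E n / Etot))
           + (1 - \<alpha>) * (totP N l - totP N (eq_profile \<alpha>))\<^sup>2 \<le> 0"
proof -
  define \<Delta> where "\<Delta> = totP N l - totP N (eq_profile \<alpha>)"
  have feas: "\<forall>n\<in>{1..N}. l n \<in> feasible E n"
    using nash by (simp add: nash_DP_def)
  have local_ineq: "0 \<le> (1 - \<alpha>) * ((eq_load \<alpha> n - fst (l n)) * \<Delta>)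
                        - \<alpha> * (fst (l n) - eq_load \<alpha> n)\<^sup>2 / (E n / Etot)"
    if n: "n \<in> {1..N}" for n
  proof -
    define w where "w = E n / Etot"
    have w: "0 < w"
      using E_pos[OF n] Etot_pos by (simp add: w_def)
    have g: "gradient \<alpha> l n = 4 * \<alpha> * (fst (l n) - eq_load \<alpha> n) + 4 * (1 - \<alpha>) * w * \<Delta>"
      using gradient_eq[OF feas] by (simp add: \<Delta>_def w_def)
    have "0 \<le> (eq_load \<alpha> n - fst (l n)) * gradient \<alpha> l n"
      using eq_profile_feasible[OF assms(1,2) n] nash_DP_first_order[OF nash n]
      by (simp add: eq_profile_def feasible_def)
    also have "\<dots> = 4 * w * ((1 - \<alpha>) * ((eq_load \<alpha> n - fst (l n)) * \<Delta>)
                        - \<alpha> * (fst (l n) - eq_load \<alpha> n)\<^sup>2 / w)"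
      using w unfolding g by (simp add: power2_eq_square field_simps)
    finally have "0 \<le> (1 - \<alpha>) * ((eq_load \<alpha> n - fst (l n)) * \<Delta>)
                        - \<alpha> * (fst (l n) - eq_load \<alpha> n)\<^sup>2 / w"
      using w by (simp add: zero_le_mult_iff)
    then show ?thesis
      by (simp add: w_def)
  qed
  have "0 \<le> (\<Sum>n\<in>{1..N}. (1 - \<alpha>) * ((eq_load \<alpha> n - fst (l n)) * \<Delta>)
                        - \<alpha> * (fst (l n) - eq_load \<alpha> n)\<^sup>2 / (E n / Etot))"
    by (rule sum_nonneg) (rule local_ineq)
  also have "\<dots> = (1 - \<alpha>) * ((\<Sum>n\<in>{1..N}. eq_load \<alpha> n - fst (l n)) * \<Delta>)
                 - (\<Sum>n\<in>{1..N}. \<alpha> * (fst (l n) - eq_load \<alpha> n)\<^sup>2 / (E n / Etot))"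
    by (simp only: sum_distrib_left sum_distrib_right sum_subtractf[symmetric])
  also have "(\<Sum>n\<in>{1..N}. eq_load \<alpha> n - fst (l n)) = - \<Delta>"
    by (simp add: \<Delta>_def totP_def eq_profile_def sum_subtractf)
  also have "(1 - \<alpha>) * (- \<Delta> * \<Delta>) = - ((1 - \<alpha>) * \<Delta>\<^sup>2)"
    by (simp add: power2_eq_square)
  finally show ?thesis
    unfolding \<Delta>_def[symmetric] by linarith
qed

lemma nash_DP_unique:
  assumes "0 < \<alpha>" "\<alpha> \<le> 1" and nash: "nash_DP \<alpha> N E lhat l" and n: "n \<in> {1..N}"
  shows "l n = eq_profile \<alpha> n"
proof -
  define dist where "dist m = \<alpha> * (fst (l m) - eq_load \<alpha> m)\<^sup>2 / (E m / Etot)" for m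
  have dist_nonneg: "0 \<le> dist m" if "m \<in> {1..N}" for m
    using assms(1) E_pos[OF that] Etot_pos by (simp add: dist_def)
  have "0 \<le> (1 - \<alpha>) * (totP N l - totP N (eq_profile \<alpha>))\<^sup>2"
    using assms(2) by simp
  then have "(\<Sum>m\<in>{1..N}. dist m) \<le> 0"
    using nash_DP_distance_bound[OF _ assms(2) nash] assms(1) unfolding dist_def by linarith
  then have "dist n = 0"
    using sum_nonneg_eq_0_iff[of "{1..N}" dist] sum_nonneg[of "{1..N}" dist] dist_nonneg n
    by fastforce
  then have "fst (l n) = eq_load \<alpha> n"
    using assms(1) E_pos[OF n] Etot_pos by (simp add: dist_def)
  moreover have "l n \<in> feasible E n"
    using nash n by (simp add: nash_DP_def)
  ultimately show ?thesis
    by (auto simp: eq_profile_def feasible_def prod_eq_iff)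
qed

lemma nash_DP_totP:
  assumes "0 \<le> \<alpha>" "\<alpha> \<le> 1" and nash: "nash_DP \<alpha> N E lhat l"
  shows "totP N l = totP N (eq_profile \<alpha>)"
proof (cases "\<alpha> = 1")
  case True
  then show ?thesis
    using nash_DP_unique[of \<alpha> l] nash unfolding totP_def by (intro sum.cong) auto
next
  case False
  have "0 \<le> (\<Sum>n\<in>{1..N}. \<alpha> * (fst (l n) - eq_load \<alpha> n)\<^sup>2 / (E n / Etot))"
    using assms(1) E_pos Etot_pos
    by (intro sum_nonneg divide_nonneg_pos mult_nonneg_nonneg divide_pos_pos) auto
  then have "(1 - \<alpha>) * (totP N l - totP N (eq_profile \<alpha>))\<^sup>2 \<le> 0"
    using nash_DP_distance_bound[OF assms] by linarith
  then show ?thesis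
    using False assms(2) by (simp add: mult_le_0_iff)
qed

lemma SC_DP_nash:
  assumes "0 \<le> \<alpha>" "\<alpha> \<le> 1" and nash: "nash_DP \<alpha> N E lhat l"
  shows "SC_DP \<alpha> N E lhat l = SC_DP \<alpha> N E lhat (eq_profile \<alpha>)"
proof -
  have l_feas: "\<forall>n\<in>{1..N}. l n \<in> feasible E n"
    using nash by (simp add: nash_DP_def)
  have "\<alpha> * (fst (l n) - fst (lhat n))\<^sup>2 = \<alpha> * (fst (eq_profile \<alpha> n) - fst (lhat n))\<^sup>2"
    if "n \<in> {1..N}" for n
    using nash_DP_unique[OF _ assms(2) nash that] assms(1) by (cases "\<alpha> = 0") auto
  then have "(\<Sum>n\<in>{1..N}. \<alpha> * (fst (l n) - fst (lhat n))\<^sup>2)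
      = (\<Sum>n\<in>{1..N}. \<alpha> * (fst (eq_profile \<alpha> n) - fst (lhat n))\<^sup>2)"
    by (rule sum.cong[OF refl])
  then show ?thesis
    using eq_profile_feasible[OF assms(1,2)]
    by (simp add: SC_DP_if_feasible[OF l_feas] SC_DP_if_feasible nash_DP_totP[OF assms])
qed

lemma SC_DP_eq_profile:
  assumes "0 \<le> \<alpha>" "\<alpha> \<le> 1"
  shows "SC_DP \<alpha> N E lhat (eq_profile \<alpha>)
           = SC_closed_form Etot D ((\<Sum>n\<in>{1..N}. (E n)\<^sup>2) / Etot\<^sup>2) \<alpha>"
proof -
  have feas: "\<forall>n\<in>{1..N}. eq_profile \<alpha> n \<in> feasible E n"
    using eq_profile_feasible[OF assms] by blast
  define c where "c = (1 - \<alpha>) * D / (2 * Etot)"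
  have "fst (eq_profile \<alpha> n) - fst (lhat n) = - (c * E n)" for n
    by (simp add: eq_profile_def eq_load_def c_def)
  then have "(\<Sum>n\<in>{1..N}. \<alpha> * (fst (eq_profile \<alpha> n) - fst (lhat n))\<^sup>2)
      = \<alpha> * c\<^sup>2 * (\<Sum>n\<in>{1..N}. (E n)\<^sup>2)"
    by (simp add: sum_distrib_left power_mult_distrib mult_ac)
  then have "SC_DP \<alpha> N E lhat (eq_profile \<alpha>)
      = (1 - \<alpha>) * (((Etot + \<alpha> * D) / 2)\<^sup>2 + (Etot - (Etot + \<alpha> * D) / 2)\<^sup>2)
        + 2 * (\<alpha> * ((1 - \<alpha>) * D / (2 * Etot))\<^sup>2 * (\<Sum>n\<in>{1..N}. (E n)\<^sup>2))"
    by (simp add: SC_DP_if_feasible[OF feas] totP_eq_profile c_def)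
  also have "\<dots> = SC_closed_form Etot D ((\<Sum>n\<in>{1..N}. (E n)\<^sup>2) / Etot\<^sup>2) \<alpha>"
    using Etot_pos by (simp add: SC_closed_form_def power2_eq_square field_simps)
  finally show ?thesis .
qed

end

theorem theorem5:
  fixes N :: nat and E :: "nat \<Rightarrow> real" and lhat :: "nat \<Rightarrow> real \<times> real"
  assumes N: "N \<ge> 1"
    and Epos: "\<forall>n\<in>{1..N}. E n > 0"
    and lhat_nonneg: "\<forall>n\<in>{1..N}. fst (lhat n) \<ge> 0 \<and> snd (lhat n) \<ge> 0"
    and lhat_sum: "\<forall>n\<in>{1..N}. fst (lhat n) + snd (lhat n) = E n"
    and peak: "totP N lhat \<ge> totE N E / 2" "totE N E / 2 \<ge> totO N lhat"
    and cond: "\<forall>n\<in>{1..N}. fst (lhat n) / E n + 1/2 \<ge> totP N lhat / totE N E"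
  shows "(\<forall>\<alpha>\<in>{0..1}. \<exists>l. nash_DP \<alpha> N E lhat l)
    \<and> (\<forall>\<alpha>\<in>{0..1}. \<forall>l. nash_DP \<alpha> N E lhat l \<longrightarrow>
          SC_DP \<alpha> N E lhat l =
            (1 - \<alpha>) * ((totE N E)^2 / 2
              + (totP N lhat - totO N lhat)^2 / 2
                * (\<alpha>^2 + ((\<Sum>n\<in>{1..N}. (E n)^2) / (totE N E)^2) * (1 - \<alpha>) * \<alpha>)))
    \<and> (\<forall>\<alpha>\<in>{0..1}. \<forall>\<beta>\<in>{0..1}. \<forall>l l'. \<alpha> < \<beta> \<longrightarrow>
          nash_DP \<alpha> N E lhat l \<longrightarrow> nash_DP \<beta> N E lhat l' \<longrightarrow>
          SC_DP \<beta> N E lhat l' < SC_DP \<alpha> N E lhat l)"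
proof -
  interpret two_period_peak N E lhat
    using assms by unfold_locales (auto simp: mem_feasible_iff eq_diff_eq add.commute)
  let ?V = "(\<Sum>n\<in>{1..N}. (E n)\<^sup>2) / Etot\<^sup>2"
  have SC: "SC_DP \<alpha> N E lhat l = SC_closed_form Etot D ?V \<alpha>"
    if "\<alpha> \<in> {0..1}" "nash_DP \<alpha> N E lhat l" for \<alpha> l
    using that SC_DP_nash SC_DP_eq_profile by simp
  have "SC_closed_form Etot D ?V \<beta> < SC_closed_form Etot D ?V \<alpha>"
    if "\<alpha> \<in> {0..1}" "\<beta> \<in> {0..1}" "\<alpha> < \<beta>" for \<alpha> \<beta>
    using that Etot_pos D_sq_le_Etot_sq energy_square_share_pos energy_square_share_le_1
    by (intro SC_closed_form_strict_decreasing) auto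
  then show ?thesis
    unfolding SC_closed_form_def[symmetric] using nash_DP_eq_profile SC by (auto intro!: exI)
qed

end
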